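(* Let $k\ge4$ be an integer, let $(\mathcal X,\mathcal F,t)$ be an instance of SET-COVER, and let $\mathbb G$ be the graph constructed from it as described in the context. If $E'$ is a good $k$-completion set of $\mathbb G$, then $\{S_j\in\mathcal F: (S_j,S'_j)\in E'\}$ is a set cover of $\mathcal X$ of size $|E'|$.
   Context: SET-COVER instance $(\mathcal X,\mathcal F,t)$: a finite set $\mathcal X$ of items, a family $\mathcal F$ of nonempty subsets of $\mathcal X$ such that every item lies in some set of $\mathcal F$, and an integer $t$; a set cover is a subfamily of $\mathcal F$ whose union is $\mathcal X$. For $k\ge4$ the graph $\mathbb G$ is built as follows: (1) for each item $x_i\in\mathcal X$ add vertices $x_i,x'_i$ and the item edge $(x_i,x'_i)$; (2) for each set $S_j\in\mathcal F$ add a set subgraph $\mathbb G_j$ isomorphic to $K_{k-2}$ minus one edge, whose missing edge is between vertices named $S_j$ and $S'_j$; (3) for each $x_i\in\mathcal X$ and $S_j\in\mathcal F$ with $x_i\in S_j$, join both $x_i$ and $x'_i$ to every vertex of $\mathbb G_j$; (4) for each edge of the graph obtained so far other than the item edges, add $k-2$ new vertices forming a $k$-clique together with the endpoints of that edge; (5) add a vertex $P$, add the edge $(S_j,P)$ for every $S_j\in\mathcal F$, and for each such edge add $k-2$ new vertices forming a $k$-clique with $S_j$ and $P$. A connected graph has a $(k,1)$-cover if each edge lies in a clique of order $k$; a $k$-completion set of $\mathbb G$ is a set $E'$ of non-edges of $\mathbb G$ such that $\mathbb G\cup E'$ has a $(k,1)$-cover; it is good if $E'\subseteq\{(S_j,S'_j):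 S_j\in\mathcal F\}$. *)

theory Defs
  imports Main
begin

text \<open>Base vertices (steps 1, 2, 3 and the vertex P of step 5):
  Itm x = x_i, Itm' x = x'_i, SV S i = the i-th vertex (i < k-2) of the set subgraph G_j
  of the set S = S_j (with SV S 0 = S_j and SV S 1 = S'_j the endpoints of the
  missing edge), PV = P.\<close>
datatype 'a bvtx = Itm 'a | Itm' 'a | SV "'a set" nat | PV

text \<open>All vertices: base vertices, and the k-2 new vertices Ext e i (i < k-2) added for
  the edge e (steps 4 and 5).\<close>
datatype 'a vtx = B "'a bvtx" | Ext "'a bvtx set" nat

definition item_edges :: "'a set \<Rightarrow> 'a bvtx set set" where
  "item_edges X = {{Itm x, Itm' x} | x. x \<in> X}"

definition set_edges :: "nat \<Rightarrow> 'a set set \<Rightarrow> 'a bvtx set set" where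
  "set_edges k F = {{SV S i, SV S j} | S i j. S \<in> F \<and> i < k - 2 \<and> j < k - 2 \<and> i \<noteq> j
                      \<and> {i, j} \<noteq> {0, 1}}"

definition incidence_edges :: "nat \<Rightarrow> 'a set set \<Rightarrow> 'a bvtx set set" where
  "incidence_edges k F =
     {{Itm x, SV S i} | x S i. S \<in> F \<and> x \<in> S \<and> i < k - 2}
   \<union> {{Itm' x, SV S i} | x S i. S \<in> F \<and> x \<in> S \<and> i < k - 2}"

definition base_edges :: "nat \<Rightarrow> 'a set \<Rightarrow> 'a set set \<Rightarrow> 'a bvtx set set" where
  "base_edges k X F = item_edges X \<union> set_edges k F \<union> incidence_edges k F"

definition P_edges :: "'a set set \<Rightarrow> 'a bvtx set set" where
  "P_edges F = {{SV S 0, PV} | S. S \<in> F}"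

definition gadget_edges :: "nat \<Rightarrow> 'a bvtx set \<Rightarrow> 'a vtx set set" where
  "gadget_edges k e =
     {{u, v} | u v. u \<noteq> v \<and> u \<in> B ` e \<union> {Ext e i | i. i < k - 2}
                          \<and> v \<in> B ` e \<union> {Ext e i | i. i < k - 2}}"

definition G_edges :: "nat \<Rightarrow> 'a set \<Rightarrow> 'a set set \<Rightarrow> 'a vtx set set" where
  "G_edges k X F =
     (image B ` item_edges X)
   \<union> (\<Union>e \<in> (base_edges k X F - item_edges X) \<union> P_edges F. gadget_edges k e)"

definition G_vertices :: "nat \<Rightarrow> 'a set \<Rightarrow> 'a set set \<Rightarrow> 'a vtx set" where
  "G_vertices k X F = \<Union> (G_edges k X F) \<union> {B PV}"

definition is_clique :: "'v set set \<Rightarrow> 'v set \<Rightarrow> bool" where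
  "is_clique E K \<longleftrightarrow> (\<forall>u\<in>K. \<forall>v\<in>K. u \<noteq> v \<longrightarrow> {u, v} \<in> E)"

definition has_k1_cover :: "nat \<Rightarrow> 'v set set \<Rightarrow> bool" where
  "has_k1_cover k E \<longleftrightarrow>
     (\<forall>e\<in>E. \<exists>K. e \<subseteq> K \<and> finite K \<and> card K = k \<and> is_clique E K)"

definition k_completion_set :: "nat \<Rightarrow> 'a set \<Rightarrow> 'a set set \<Rightarrow> 'a vtx set set \<Rightarrow> bool" where
  "k_completion_set k X F E' \<longleftrightarrow>
     (\<forall>e\<in>E'. e \<notin> G_edges k X F \<and>
        (\<exists>u v. u \<noteq> v \<and> e = {u, v} \<and> u \<in> G_vertices k X F \<and> v \<in> G_vertices k X F))
     \<and> has_k1_cover k (G_edges k X F \<union> E')"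

definition good_completion_set :: "nat \<Rightarrow> 'a set \<Rightarrow> 'a set set \<Rightarrow> 'a vtx set set \<Rightarrow> bool" where
  "good_completion_set k X F E' \<longleftrightarrow>
     k_completion_set k X F E' \<and> E' \<subseteq> {{B (SV S 0), B (SV S 1)} | S. S \<in> F}"

definition set_cover_instance :: "'a set \<Rightarrow> 'a set set \<Rightarrow> bool" where
  "set_cover_instance X F \<longleftrightarrow> finite X \<and> (\<forall>S\<in>F. S \<noteq> {} \<and> S \<subseteq> X) \<and> \<Union> F = X"

definition is_set_cover :: "'a set \<Rightarrow> 'a set set \<Rightarrow> 'a set set \<Rightarrow> bool" where
  "is_set_cover X F C \<longleftrightarrow> C \<subseteq> F \<and> \<Union> C = X"

end

theory Submission
  imports Defs
begin

text \<open>Let \<open>E'\<close> be good. The item edge \<open>x x'\<close> lies in a \<open>k\<close>-clique \<open>K\<close> of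
  \<open>G \<union> E'\<close>. Since \<open>E'\<close> adds no edge at item vertices, the other \<open>k - 2\<close> vertices of \<open>K\<close>
  are common neighbours of \<open>x\<close> and \<open>x'\<close> in \<open>G\<close>, i.e. vertices of set subgraphs \<open>G\<^sub>j\<close> with
  \<open>x \<in> S\<^sub>j\<close>; being pairwise adjacent they all belong to one \<open>G\<^sub>j\<close>, which has exactly \<open>k - 2\<close>
  vertices. So \<open>S\<^sub>j, S'\<^sub>j \<in> K\<close>, and as they are not adjacent in \<open>G\<close>, the edge \<open>S\<^sub>j S'\<^sub>j\<close>
  belongs to \<open>E'\<close>. Distinct sets give distinct such edges, whence the cardinality.\<close>

lemma card_preimage_subset_image:
  assumes "inj f" "E \<subseteq> f ` A"
  shows "card {a \<in> A. f a \<in> E} = card E"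
proof -
  have "{a \<in> A. f a \<in> E} = f -` E"
    using assms by (auto simp: inj_eq)
  moreover have "E \<subseteq> range f"
    using assms(2) by blast
  ultimately show ?thesis
    using card_vimage_inj[OF assms(1)] by simp
qed

lemma item_edge_in_G_edges:
  assumes "x \<in> X"
  shows "{B (Itm x), B (Itm' x)} \<in> G_edges k X F"
proof -
  have "{Itm x, Itm' x} \<in> item_edges X"
    using assms unfolding item_edges_def by blast
  then have "B ` {Itm x, Itm' x} \<in> image B ` item_edges X"
    by (rule imageI)
  then show ?thesis
    unfolding G_edges_def by simp
qed

lemma G_edgesE:
  assumes "f \<in> G_edges k X F"
  obtains x where "x \<in> X" "f = {B (Itm x), B (Itm' x)}"
  | e where "e \<in> (base_edges k X F - item_edges X) \<union> P_edges F" "f \<subseteq> B ` e \<union> range (Ext e)"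
proof -
  consider (item) "f \<in> image B ` item_edges X"
    | (gadget) e where "e \<in> (base_edges k X F - item_edges X) \<union> P_edges F"
      "f \<in> gadget_edges k e"
    using assms unfolding G_edges_def by blast
  then show ?thesis
  proof cases
    case item
    then obtain x where "x \<in> X" "f = B ` {Itm x, Itm' x}"
      unfolding item_edges_def by blast
    then show ?thesis using that(1) by simp
  next
    case (gadget e)
    moreover have "f \<subseteq> B ` e \<union> range (Ext e)"
      using gadget(2) unfolding gadget_edges_def by blast
    ultimately show ?thesis using that(2) by blast
  qed
qed

lemma G_neighbour_of_item_vertex:
  assumes "{B v, w} \<in> G_edges k X F" "v \<in> {Itm x, Itm' x}" "w \<noteq> B v"
  shows "w \<in> B ` {Itm x, Itm' x} \<or>
    (\<exists>S i. S \<in> F \<and> x \<in> S \<and> i < k - 2 \<and> (w = B (SV S i) \<or> (\<exists>j. w = Ext {v, SV S i} j)))"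
  using assms(1)
proof (cases rule: G_edgesE)
  case 1
  then show ?thesis using assms(2) by (auto simp: doubleton_eq_iff)
next
  case (2 e)
  then have "v \<in> e" by auto
  with 2 assms(2) obtain S i where "S \<in> F" "x \<in> S" "i < k - 2" "e = {v, SV S i}"
    unfolding base_edges_def set_edges_def incidence_edges_def P_edges_def item_edges_def
    by auto
  then show ?thesis using 2 assms(3) by auto
qed

text \<open>The gadget vertices \<open>Ext e j\<close> of an incidence edge \<open>e\<close> are adjacent to only one of
  \<open>x\<close>, \<open>x'\<close>, so common neighbours must be set vertices.\<close>

lemma common_G_neighbour_of_item_edge:
  assumes "{B (Itm x), w} \<in> G_edges k X F" "{B (Itm' x), w} \<in> G_edges k X F"
    and "w \<notin> B ` {Itm x, Itm' x}"
  shows "\<exists>S i. S \<in> F \<and> x \<in> S \<and> i < k - 2 \<and> w = B (SV S i)"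
  using G_neighbour_of_item_vertex[OF assms(1)] G_neighbour_of_item_vertex[OF assms(2)] assms(3)
  by (auto simp: doubleton_eq_iff)

lemma G_edge_between_set_vertices:
  assumes "{B (SV S i), B (SV T j)} \<in> G_edges k X F" "SV S i \<noteq> SV T j"
  shows "S = T \<and> {i, j} \<noteq> {0, 1}"
  using assms(1)
proof (cases rule: G_edgesE)
  case 1
  then show ?thesis by (auto simp: doubleton_eq_iff)
next
  case (2 e)
  then have in_e: "SV S i \<in> e" "SV T j \<in> e" by auto
  have "e \<notin> incidence_edges k F"
  proof
    assume "e \<in> incidence_edges k F"
    then obtain y U a where "e = {Itm y, SV U a} \<or> e = {Itm' y, SV U a}"
      unfolding incidence_edges_def by blast
    with in_e assms(2) show False by auto
  qed
  moreover have "e \<notin> P_edges F"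
  proof
    assume "e \<in> P_edges F"
    then obtain U where "e = {SV U 0, PV}" unfolding P_edges_def by blast
    with in_e assms(2) show False by auto
  qed
  ultimately have "e \<in> set_edges k F"
    using 2 unfolding base_edges_def by blast
  then obtain U a b where e: "e = {SV U a, SV U b}" and ab: "{a, b} \<noteq> {0, 1}"
    unfolding set_edges_def by force
  with in_e assms(2) have "{SV S i, SV T j} = {SV U a, SV U b}" by blast
  then have "S = U" "T = U" "{i, j} = {a, b}" by (auto simp: doubleton_eq_iff)
  with ab show ?thesis by simp
qed

context
  fixes k :: nat and X :: "'a set" and F :: "'a set set" and E' :: "'a vtx set set"
  assumes good_shape: "E' \<subseteq> {{B (SV S 0), B (SV S 1)} | S. S \<in> F}"
begin

lemma completion_edge_avoids_items:
  assumes "e \<in> E'"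
  shows "B (Itm x) \<notin> e" "B (Itm' x) \<notin> e"
proof -
  from assms good_shape obtain S where "e = {B (SV S 0), B (SV S 1)}" by blast
  then show "B (Itm x) \<notin> e" "B (Itm' x) \<notin> e" by simp_all
qed

lemma completion_adjacent_set_vertices_same_set:
  assumes "{B (SV S i), B (SV T j)} \<in> G_edges k X F \<union> E'" "SV S i \<noteq> SV T j"
  shows "S = T"
  using assms(1)
proof
  assume "{B (SV S i), B (SV T j)} \<in> E'"
  with good_shape obtain U where "{B (SV S i), B (SV T j)} = {B (SV U 0), B (SV U 1)}"
    by blast
  then show ?thesis by (auto simp: doubleton_eq_iff)
qed (use G_edge_between_set_vertices assms(2) in blast)

lemma clique_through_item_edge_other_vertex:
  assumes "is_clique (G_edges k X F \<union> E') K" "{B (Itm x), B (Itm' x)} \<subseteq> K"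
    and "w \<in> K - B ` {Itm x, Itm' x}"
  shows "\<exists>S i. S \<in> F \<and> x \<in> S \<and> i < k - 2 \<and> w = B (SV S i)"
proof (rule common_G_neighbour_of_item_edge)
  have adj: "{u, w} \<in> G_edges k X F \<union> E'" if "u \<in> K" "u \<noteq> w" for u
    using assms(1,3) that unfolding is_clique_def by blast
  show "{B (Itm x), w} \<in> G_edges k X F"
    using adj[of "B (Itm x)"] assms(2,3) completion_edge_avoids_items(1)[of "{B (Itm x), w}" x]
    by blast
  show "{B (Itm' x), w} \<in> G_edges k X F"
    using adj[of "B (Itm' x)"] assms(2,3) completion_edge_avoids_items(2)[of "{B (Itm' x), w}" x]
    by blast
  show "w \<notin> B ` {Itm x, Itm' x}"
    using assms(3) by blast
qed

lemma clique_through_item_edge_in_set_subgraph: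
  assumes "is_clique (G_edges k X F \<union> E') K" "{B (Itm x), B (Itm' x)} \<subseteq> K"
    and "B (SV S i) \<in> K"
  shows "K - B ` {Itm x, Itm' x} \<subseteq> (\<lambda>i. B (SV S i)) ` {..<k - 2}"
proof
  fix w assume w: "w \<in> K - B ` {Itm x, Itm' x}"
  then obtain T j where T: "j < k - 2" "w = B (SV T j)"
    using clique_through_item_edge_other_vertex[OF assms(1,2)] by blast
  have "T = S"
  proof (cases "w = B (SV S i)")
    case False
    then have "{B (SV S i), w} \<in> G_edges k X F \<union> E'"
      using assms(1,3) w unfolding is_clique_def by auto
    then show ?thesis using completion_adjacent_set_vertices_same_set False T(2) by auto
  qed (use T in simp)
  with T show "w \<in> (\<lambda>i. B (SV S i)) ` {..<k - 2}" by simp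
qed

lemma clique_through_item_edge_gives_completion_edge:
  assumes "k \<ge> 4" "is_clique (G_edges k X F \<union> E') K" "finite K" "card K = k"
    and "{B (Itm x), B (Itm' x)} \<subseteq> K"
  shows "\<exists>S\<in>F. x \<in> S \<and> {B (SV S 0), B (SV S 1)} \<in> E'"
proof -
  define K' where "K' = K - B ` {Itm x, Itm' x}"
  have card_K': "card K' = k - 2"
    unfolding K'_def using assms(3-5) by (subst card_Diff_subset) auto
  with assms(1) have "K' \<noteq> {}"
    by auto
  then obtain w where w: "w \<in> K'"
    by blast
  then obtain S i where S: "S \<in> F" "x \<in> S" "w = B (SV S i)"
    using clique_through_item_edge_other_vertex[OF assms(2,5)] unfolding K'_def by blast
  have K'_eq: "K' = (\<lambda>i. B (SV S i)) ` {..<k - 2}"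
  proof (rule card_subset_eq)
    show "K' \<subseteq> (\<lambda>i. B (SV S i)) ` {..<k - 2}"
      using clique_through_item_edge_in_set_subgraph[OF assms(2,5)] S(3) w
      unfolding K'_def by blast
    show "card K' = card ((\<lambda>i. B (SV S i)) ` {..<k - 2})"
      using card_K' by (subst card_image) (auto intro: inj_onI)
  qed simp
  have "B (SV S 0) \<in> K'" "B (SV S 1) \<in> K'"
    using assms(1) unfolding K'_eq by auto
  then have "B (SV S 0) \<in> K" "B (SV S 1) \<in> K"
    unfolding K'_def by blast+
  then have "{B (SV S 0), B (SV S 1)} \<in> G_edges k X F \<union> E'"
    using assms(2) unfolding is_clique_def by auto
  moreover have "{B (SV S 0), B (SV S 1)} \<notin> G_edges k X F"
    using G_edge_between_set_vertices[of S 0 S 1] by auto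
  ultimately show ?thesis using S by blast
qed

end

lemma inj_set_subgraph_missing_edge: "inj (\<lambda>S. {B (SV S 0), B (SV S 1)})"
  by (rule injI) (simp add: doubleton_eq_iff)

theorem lemma4:
  fixes k :: nat and X :: "'a set" and F :: "'a set set" and t :: nat
    and E' :: "'a vtx set set"
  assumes "k \<ge> 4"
    and "set_cover_instance X F"
    and "good_completion_set k X F E'"
  shows "is_set_cover X F {S \<in> F. {B (SV S 0), B (SV S 1)} \<in> E'}
         \<and> card {S \<in> F. {B (SV S 0), B (SV S 1)} \<in> E'} = card E'"
proof -
  let ?C = "{S \<in> F. {B (SV S 0), B (SV S 1)} \<in> E'}"
  have shape: "E' \<subseteq> {{B (SV S 0), B (SV S 1)} | S. S \<in> F}"
    and cover: "has_k1_cover k (G_edges k X F \<union> E')"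
    using assms(3) unfolding good_completion_set_def k_completion_set_def by auto
  have "\<exists>S\<in>F. x \<in> S \<and> {B (SV S 0), B (SV S 1)} \<in> E'" if x: "x \<in> X" for x
  proof -
    obtain K where K: "{B (Itm x), B (Itm' x)} \<subseteq> K" "finite K" "card K = k"
      "is_clique (G_edges k X F \<union> E') K"
      using cover item_edge_in_G_edges[OF x] unfolding has_k1_cover_def by blast
    show ?thesis
      using clique_through_item_edge_gives_completion_edge[OF shape assms(1) K(4,2,3,1)] .
  qed
  then have "X \<subseteq> \<Union> ?C"
    by blast
  moreover have "\<Union> ?C \<subseteq> X"
    using assms(2) unfolding set_cover_instance_def by blast
  ultimately have "is_set_cover X F ?C"
    unfolding is_set_cover_def by blast
  moreover have "card ?C = card E'"
    using shape[unfolded Setcompr_eq_image]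
    by (rule card_preimage_subset_image[OF inj_set_subgraph_missing_edge])
  ultimately show ?thesis ..
qed

end
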